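(* Let $\{a_n\}_{n\ge1}$ be a sequence of positive real numbers. Suppose that at least one of the following holds: either $\frac{a_{2n}}{a_n}>1$ for all sufficiently large $n$, or $\frac{a_{2n+1}}{a_n}>1+\frac{1}{2n}$ for all sufficiently large $n$. Then $\sum_{n=1}^\infty a_n$ diverges. *)

theory Defs
  imports Complex_Main
begin

end

theory Submission
  imports Defs
begin

text \<open>The condition forces \<open>a n \<le> a (2 * n + c)\<close> for large \<open>n\<close> and a fixed \<open>c \<le> 1\<close>.
  Since \<open>n \<mapsto> 2 * n + c\<close> maps \<open>[L, 2L)\<close> injectively into \<open>[2L, 4L)\<close>, the sums of \<open>a\<close>
  over the dyadic blocks \<open>[2^k N, 2^(k+1) N)\<close> are nondecreasing in \<open>k\<close>, hence bounded below by a
  positive constant, whereas for a convergent series they must tend to \<open>0\<close>.\<close>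

lemma dyadic_block_sum_le_next:
  fixes a :: "nat \<Rightarrow> 'a::ordered_comm_monoid_add"
  assumes nonneg: "\<And>n. n \<ge> L \<Longrightarrow> a n \<ge> 0"
    and "c \<le> 1"
    and le_step: "\<And>n. n \<ge> L \<Longrightarrow> a n \<le> a (2 * n + c)"
  shows "sum a {L..<2 * L} \<le> sum a {2 * L..<4 * L}"
proof -
  let ?f = "\<lambda>n. 2 * n + c"
  have "inj_on ?f {L..<2 * L}" by (auto simp: inj_on_def)
  moreover have "?f ` {L..<2 * L} \<subseteq> {2 * L..<4 * L}" using \<open>c \<le> 1\<close> by auto
  ultimately have "sum a {L..<2 * L} \<le> sum (a \<circ> ?f) {L..<2 * L}"
    by (intro sum_mono) (simp add: le_step)
  also have "\<dots> = sum a (?f ` {L..<2 * L})"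
    using \<open>inj_on ?f {L..<2 * L}\<close> by (simp add: sum.reindex)
  also have "\<dots> \<le> sum a {2 * L..<4 * L}"
    using \<open>?f ` {L..<2 * L} \<subseteq> {2 * L..<4 * L}\<close> by (intro sum_mono2) (auto intro: nonneg)
  finally show ?thesis .
qed

lemma summable_dyadic_block_sum_tendsto_zero:
  fixes a :: "nat \<Rightarrow> 'a::real_normed_vector"
  assumes "summable a"
  shows "(\<lambda>L. sum a {L..<2 * L}) \<longlonglongrightarrow> 0"
proof -
  have partial: "(\<lambda>n. sum a {..<n}) \<longlonglongrightarrow> suminf a"
    using assms by (rule summable_LIMSEQ)
  have "filterlim (\<lambda>L::nat. 2 * L) sequentially sequentially"
    by (rule mult_nat_left_at_top) simp
  with partial have "(\<lambda>L. sum a {..<2 * L}) \<longlonglongrightarrow> suminf a"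
    by (rule filterlim_compose)
  then have "(\<lambda>L. sum a {..<2 * L} - sum a {..<L}) \<longlonglongrightarrow> suminf a - suminf a"
    using partial by (rule tendsto_diff)
  moreover have "sum a {..<2 * L} - sum a {..<L} = sum a {L..<2 * L}" for L
    unfolding lessThan_atLeast0 by (rule sum_diff_nat_ivl) simp_all
  ultimately show ?thesis by simp
qed

lemma not_summable_if_eventually_le_double:
  fixes a :: "nat \<Rightarrow> real"
  assumes pos: "\<forall>\<^sub>F n in sequentially. a n > 0"
    and "c \<le> 1"
    and le_step: "\<forall>\<^sub>F n in sequentially. a n \<le> a (2 * n + c)"
  shows "\<not> summable a"
proof
  assume "summable a"
  obtain N where N: "N \<ge> 1" "\<And>n. n \<ge> N \<Longrightarrow> a n > 0 \<and> a n \<le> a (2 * n + c)"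
    using eventually_conj[OF pos le_step] eventually_ge_at_top[of 1]
    by (metis (no_types, lifting) eventually_sequentially max.bounded_iff nle_le)
  define B where "B L = sum a {L..<2 * L}" for L
  have B_step: "B L \<le> B (2 * L)" if "L \<ge> N" for L
  proof -
    have "B L \<le> sum a {2 * L..<4 * L}"
      unfolding B_def by (rule dyadic_block_sum_le_next)
        (use N(2) that \<open>c \<le> 1\<close> in \<open>auto intro: less_imp_le\<close>)
    moreover have "2 * (2 * L) = 4 * L" by simp
    ultimately show ?thesis by (simp only: B_def)
  qed
  have B_lower: "B N \<le> B (2 ^ k * N)" for k
  proof (induction k)
    case (Suc k)
    have "2 ^ k * N \<ge> N" by simp
    then show ?case using Suc.IH B_step[of "2 ^ k * N"] by (simp add: mult.assoc)
  qed simp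
  have "B N \<ge> a N"
    unfolding B_def using N by (intro member_le_sum) (auto intro: less_imp_le)
  with N have "B N > 0" by (meson le_refl less_le_trans)
  have "strict_mono (\<lambda>k::nat. 2 ^ k * N)"
    using N(1) unfolding strict_mono_Suc_iff by simp
  then have "(\<lambda>k. B (2 ^ k * N)) \<longlonglongrightarrow> 0"
    using LIMSEQ_subseq_LIMSEQ[OF summable_dyadic_block_sum_tendsto_zero[OF \<open>summable a\<close>]]
    by (simp add: B_def comp_def)
  then have "B N \<le> 0"
    by (rule LIMSEQ_le_const) (use B_lower in blast)
  with \<open>B N > 0\<close> show False by simp
qed

theorem corollary2p1p4:
  fixes a :: "nat \<Rightarrow> real"
  assumes pos: "\<And>n. n \<ge> 1 \<Longrightarrow> a n > 0"
    and cond: "(\<forall>\<^sub>F n in sequentially. a (2 * n) / a n > 1)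
             \<or> (\<forall>\<^sub>F n in sequentially. a (2 * n + 1) / a n > 1 + 1 / (2 * real n))"
  shows "\<not> summable (\<lambda>n. a (n + 1))"
proof -
  have eventually_pos: "\<forall>\<^sub>F n in sequentially. a n > 0"
    using eventually_ge_at_top[of 1] by eventually_elim (rule pos)
  from cond have "\<exists>c\<le>1. \<forall>\<^sub>F n in sequentially. a n \<le> a (2 * n + c)"
  proof
    assume "\<forall>\<^sub>F n in sequentially. a (2 * n) / a n > 1"
    with eventually_pos have "\<forall>\<^sub>F n in sequentially. a n \<le> a (2 * n + 0)"
      by eventually_elim simp
    then show ?thesis by blast
  next
    assume "\<forall>\<^sub>F n in sequentially. a (2 * n + 1) / a n > 1 + 1 / (2 * real n)"
    with eventually_pos have "\<forall>\<^sub>F n in sequentially. a n \<le> a (2 * n + 1)"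
    proof eventually_elim
      case (elim n)
      have "a n \<le> (1 + 1 / (2 * real n)) * a n"
        using elim(1) by (simp add: distrib_right)
      also have "\<dots> < a (2 * n + 1)"
        using elim by (simp add: less_divide_eq)
      finally show ?case by simp
    qed
    then show ?thesis by blast
  qed
  then have "\<not> summable a"
    using eventually_pos not_summable_if_eventually_le_double by blast
  then show ?thesis by (simp add: summable_Suc_iff)
qed

end
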